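(* Let $x\in\mathrm{GF}(2^7)$ be such that the eight elements $0,1,x,x^3,x^7,x^{15},x^{31},x^{63}$ are pairwise distinct. Then the set $\{0,1,x,x^3,x^7,x^{15},x^{31},x^{63}\}$ is a subgroup of the additive group of $\mathrm{GF}(2^7)$ if and only if either $1+x=x^7$ or $1+x^3=x^7$. *)

theory Defs
  imports Main
begin

definition additive_subgroup :: "'a::ab_group_add set \<Rightarrow> bool" where
  "additive_subgroup S \<longleftrightarrow> 0 \<in> S \<and> (\<forall>a\<in>S. \<forall>b\<in>S. a + b \<in> S) \<and> (\<forall>a\<in>S. - a \<in> S)"

end

theory Submission
  imports Defs
begin

text \<open>
  The elements \<open>x ^ (2 ^ k - 1)\<close>, \<open>k = 0, \<dots>, 6\<close>, are the orbit of \<open>1\<close> under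
  \<open>\<sigma> y = x * y\<^sup>2\<close>. In characteristic 2 the map \<open>\<sigma>\<close> is additive, and the orbit has period 7
  because \<open>x ^ 127 = 1\<close>; so every additive relation among the orbit elements can be shifted
  along the orbit. If \<open>1 + x\<close> is the \<open>k\<close>-th orbit element, shifting this relation either makes
  two of the eight elements coincide or yields one of the two relations of the theorem.
  Conversely, shifting \<open>1 + x = x ^ 7\<close> (resp. \<open>1 + x ^ 3 = x ^ 7\<close>) gives the seven lines of a
  Fano plane: \<open>{0, 1, 3}\<close> (resp. \<open>{0, 2, 3}\<close>) is a difference set modulo 7, so any two
  distinct orbit elements add up to a third one.
\<close>

lemma of_nat_card_UNIV_eq_0: "of_nat (card (UNIV :: 'a set)) = (0 :: 'a :: {ring_1, finite})"
proof -
  have "(\<Sum>y\<in>UNIV. y + (1::'a)) = (\<Sum>y\<in>UNIV. y)"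
    by (rule sum.reindex_bij_witness[where i="\<lambda>b. b - 1" and j="\<lambda>a. a + 1"]) auto
  then show ?thesis
    by (simp add: sum.distrib)
qed

lemma power_card_UNIV_minus_one_eq_1:
  fixes x :: "'a :: {field, finite}"
  assumes "x \<noteq> 0"
  shows "x ^ (card (UNIV :: 'a set) - 1) = 1"
proof -
  let ?U = "UNIV - {0 :: 'a}"
  have "(\<Prod>y\<in>?U. x * y) = (\<Prod>y\<in>?U. y)"
    by (rule prod.reindex_bij_witness[where i="\<lambda>b. b / x" and j="\<lambda>a. x * a"])
      (use assms in auto)
  moreover have "card ?U = card (UNIV :: 'a set) - 1"
    by (simp add: card_Diff_singleton)
  ultimately show ?thesis
    by (simp add: prod.distrib)
qed

lemma two_eq_zero_if_card_UNIV_power_two: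
  assumes "card (UNIV :: 'a :: {idom, finite} set) = 2 ^ n" and "0 < n"
  shows "2 = (0 :: 'a)"
proof -
  have "(2 :: 'a) ^ n = 0"
    using of_nat_card_UNIV_eq_0[where 'a = 'a] assms(1) by simp
  then show ?thesis
    by simp
qed

lemma char_two_add_self: "(2 :: 'a :: ring_1) = 0 \<Longrightarrow> a + a = (0 :: 'a)"
  by (metis mult_2 mult_zero_left)

lemma char_two_minus: "(2 :: 'a :: ring_1) = 0 \<Longrightarrow> - a = (a :: 'a)"
  by (simp add: char_two_add_self minus_unique)

lemma char_two_add_eq_swap:
  fixes a b c :: "'a :: ring_1"
  assumes "2 = (0 :: 'a)" and "a + b = c"
  shows "a + c = b"
  using assms by (metis add.assoc add_0 char_two_add_self)

lemma char_two_power2_add: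
  fixes a b :: "'a :: comm_ring_1"
  assumes "2 = (0 :: 'a)"
  shows "(a + b) ^ 2 = a ^ 2 + b ^ 2"
  using assms by (simp add: power2_sum)

definition mersenne_power :: "'a :: monoid_mult \<Rightarrow> nat \<Rightarrow> 'a" where
  "mersenne_power x k = x ^ (2 ^ k - 1)"

lemma mersenne_power_0 [simp]: "mersenne_power x 0 = 1"
  by (simp add: mersenne_power_def)

lemma mersenne_power_Suc:
  fixes x :: "'a :: comm_monoid_mult"
  shows "mersenne_power x (Suc k) = x * mersenne_power x k ^ 2"
proof -
  obtain m where "(2::nat) ^ k = Suc m"
    using not0_implies_Suc by fastforce
  then have "2 ^ Suc k - 1 = Suc ((2 ^ k - 1) * 2)"
    by simp
  then show ?thesis
    by (simp add: mersenne_power_def power_mult)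
qed

lemma mersenne_power_add_period:
  fixes x :: "'a :: comm_monoid_mult"
  assumes "mersenne_power x p = 1"
  shows "mersenne_power x (k + p) = mersenne_power x k"
  using assms by (induction k) (simp_all add: mersenne_power_Suc)

lemma mersenne_power_add_degree:
  fixes x :: "'a :: {field, finite}"
  assumes "card (UNIV :: 'a set) = 2 ^ n" and "x \<noteq> 0"
  shows "mersenne_power x (k + n) = mersenne_power x k"
proof (rule mersenne_power_add_period)
  show "mersenne_power x n = 1"
    using power_card_UNIV_minus_one_eq_1[OF assms(2)] assms(1) by (simp add: mersenne_power_def)
qed

lemma mersenne_power_relation_shift:
  fixes x :: "'a :: comm_ring_1"
  assumes "2 = (0 :: 'a)"
    and "mersenne_power x i + mersenne_power x j = mersenne_power x k"
  shows "mersenne_power x (i + n) + mersenne_power x (j + n) = mersenne_power x (k + n)"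
proof (induction n)
  case (Suc n)
  then show ?case
    by (metis add_Suc_right distrib_left mersenne_power_Suc char_two_power2_add[OF assms(1)])
qed (use assms in simp)

lemma periodic_eq_mod:
  fixes q :: "nat \<Rightarrow> 'a"
  assumes "\<And>k. q (k + p) = q k"
  shows "q k = q (k mod p)"
proof -
  have "q (j + m * p) = q j" for j m
    by (induction m) (simp_all, metis assms add.assoc add.commute)
  then show ?thesis
    by (metis mod_div_mult_eq)
qed

lemma range_periodic_eq_image_lessThan:
  fixes q :: "nat \<Rightarrow> 'a"
  assumes "\<And>k. q (k + p) = q k" and "0 < p"
  shows "range q = q ` {..<p}"
  using periodic_eq_mod[of q p, OF assms(1)] assms(2) by fastforce

lemma periodic_add_mem_if_differences_mem:
  fixes q :: "nat \<Rightarrow> 'a :: ab_semigroup_add"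
  assumes period: "\<And>k. q (k + p) = q k" and "0 < p"
    and differences: "\<And>i d. d < p \<Longrightarrow> q i + q (i + d) \<in> T"
  shows "q i + q j \<in> T"
proof -
  have ordered: "q i + q j \<in> T" if "i mod p \<le> j mod p" for i j
  proof -
    have "j mod p = i mod p + (j mod p - i mod p)"
      using that by simp
    moreover have "j mod p - i mod p < p"
      using \<open>0 < p\<close> by (simp add: less_imp_diff_less)
    ultimately show ?thesis
      using differences[of "j mod p - i mod p" "i mod p"] periodic_eq_mod[of q p, OF period]
      by metis
  qed
  show ?thesis
    using ordered[of i j] ordered[of j i] by (metis add.commute nat_le_linear)
qed

lemma periodic_difference_reflect:
  fixes q :: "nat \<Rightarrow> 'a :: ab_semigroup_add"
  assumes period: "\<And>k. q (k + p) = q k" and "d \<le> p"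
    and difference: "\<And>i. q i + q (i + d) \<in> T"
  shows "q i + q (i + (p - d)) \<in> T"
proof -
  have "q i = q (i + (p - d) + d)"
    using period \<open>d \<le> p\<close> by simp
  then show ?thesis
    using difference[of "i + (p - d)"] by (simp add: add.commute)
qed

text \<open>The hypothesis \<open>cover\<close> says that \<open>{0, a, b}\<close> is a planar difference set modulo \<open>p\<close>.\<close>

lemma additive_subgroup_orbit_of_difference_triple:
  fixes q :: "nat \<Rightarrow> 'a :: ring_1"
  assumes char: "2 = (0 :: 'a)" and period: "\<And>k. q (k + p) = q k"
    and relation: "\<And>n. q n + q (n + a) = q (n + b)"
    and "0 < a" "a \<le> b" "b \<le> p"
    and cover: "\<And>d. d < p \<Longrightarrow> d \<in> {0, a, b, b - a, p - a, p - b, p - (b - a)}"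
  shows "additive_subgroup (insert 0 (range q))"
proof -
  let ?T = "insert 0 (range q)"
  have diff_0: "q i + q (i + 0) \<in> ?T" for i
    using char_two_add_self[OF char] by simp
  have diff_a: "q i + q (i + a) \<in> ?T" for i
    using relation by simp
  have diff_b: "q i + q (i + b) \<in> ?T" for i
    using char_two_add_eq_swap[OF char relation] by simp
  have diff_b_a: "q i + q (i + (b - a)) \<in> ?T" for i
  proof -
    have "i + (p - a) + a = i + p" and "i + (p - a) + b = i + (b - a) + p"
      using \<open>a \<le> b\<close> \<open>b \<le> p\<close> by simp_all
    then have "q (i + (p - a)) + q (i + p) = q (i + (b - a) + p)"
      using relation[of "i + (p - a)"] by (simp only:)
    then have "q (i + (p - a)) + q i = q (i + (b - a))"
      by (simp only: period)
    then have "q i + q (i + (p - a)) = q (i + (b - a))"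
      by (simp add: add.commute)
    then show ?thesis
      using char_two_add_eq_swap[OF char] by blast
  qed
  have base: "q i + q (i + d) \<in> ?T" if "d \<in> {0, a, b, b - a}" for i d
    using that diff_0 diff_a diff_b diff_b_a by blast
  have reflected: "q i + q (i + (p - d)) \<in> ?T" if "d \<in> {a, b, b - a}" for i d
    by (rule periodic_difference_reflect[of q p, OF period])
      (use that base \<open>a \<le> b\<close> \<open>b \<le> p\<close> in auto)
  have differences: "q i + q (i + d) \<in> ?T" if "d < p" for i d
    using cover[OF that] base[of _ i] reflected[of _ i] by auto
  have sum_mem: "q i + q j \<in> ?T" for i j
    by (rule periodic_add_mem_if_differences_mem[of q p, OF period _ differences])
      (use \<open>0 < a\<close> \<open>a \<le> b\<close> \<open>b \<le> p\<close> in simp_all)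
  show ?thesis
    unfolding additive_subgroup_def
    using sum_mem by (auto simp: char_two_minus[OF char])
qed

lemma seven_periodic_first_sum_cases:
  fixes q :: "nat \<Rightarrow> 'a :: ring_1"
  assumes char: "2 = (0 :: 'a)" and period: "\<And>k. q (k + 7) = q k"
    and shift: "\<And>i j k n. q i + q j = q k \<Longrightarrow> q (i + n) + q (j + n) = q (k + n)"
    and distinct: "distinct [0, q 0, q 1, q 2, q 3, q 4, q 5, q 6]"
    and closed: "q 0 + q 1 \<in> insert 0 (range q)"
  shows "q 0 + q 1 = q 3 \<or> q 0 + q 2 = q 3"
proof -
  note swap = char_two_add_eq_swap[OF char]
  have "q 0 + q 1 \<noteq> 0"
    using swap[of "q 0" "q 1" 0] distinct by auto
  then obtain k where "k < 7" and k: "q 0 + q 1 = q k"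
    using closed range_periodic_eq_image_lessThan[of q 7, OF period] by auto
  then have "k \<in> {0, 1, 2, 3, 4, 5, 6}"
    by auto
  then show ?thesis
  proof (elim insertE)
    assume "k = 2"
    then have "q 1 + q 2 = q 3" and "q 1 + q 2 = q 0"
      using shift[of 0 1 2 1] swap[of "q 1" "q 0" "q 2"] k
      by (simp_all add: add.commute eval_nat_numeral)
    then show ?thesis
      using distinct by simp
  next
    assume "k = 4"
    then have "q 3 + q 4 = q 0" and "q 0 + q 4 = q 1"
      using shift[of 0 1 4 3] period[of 0] swap[of "q 0" "q 1" "q 4"] k by simp_all
    then have "q 0 + q 4 = q 3" and "q 0 + q 4 = q 1"
      using swap[of "q 4" "q 3" "q 0"] by (simp_all add: add.commute)
    then show ?thesis
      using distinct by simp
  next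
    assume "k = 5"
    then have "q 2 + q 3 = q 0"
      using shift[of 0 1 5 2] period[of 0] k by (simp add: eval_nat_numeral)
    then show ?thesis
      using swap[of "q 2" "q 3" "q 0"] by (simp add: add.commute)
  next
    assume "k = 6"
    then have "q 6 + q 0 = q 5" and "q 0 + q 6 = q 1"
      using shift[of 0 1 6 6] period[of 0] period[of 5] swap[of "q 0" "q 1" "q 6"] k by simp_all
    then show ?thesis
      using distinct by (simp add: add.commute)
  qed (use k distinct in auto)
qed

theorem lemma6:
  fixes x :: "'a::{field, finite}"
  assumes "card (UNIV :: 'a set) = 2 ^ 7"
    and "distinct [0, 1, x, x ^ 3, x ^ 7, x ^ 15, x ^ 31, x ^ 63]"
  shows "additive_subgroup {0, 1, x, x ^ 3, x ^ 7, x ^ 15, x ^ 31, x ^ 63}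
         \<longleftrightarrow> (1 + x = x ^ 7 \<or> 1 + x ^ 3 = x ^ 7)"
proof -
  let ?q = "mersenne_power x"
  have char: "2 = (0 :: 'a)"
    using two_eq_zero_if_card_UNIV_power_two[OF assms(1)] by simp
  have q_values: "?q 0 = 1" "?q 1 = x" "?q 2 = x ^ 3" "?q 3 = x ^ 7" "?q 4 = x ^ 15"
    "?q 5 = x ^ 31" "?q 6 = x ^ 63"
    by (simp_all add: mersenne_power_def)
  have period: "?q (k + 7) = ?q k" for k
    using mersenne_power_add_degree[OF assms(1)] assms(2) by simp
  have orbit: "{0, 1, x, x ^ 3, x ^ 7, x ^ 15, x ^ 31, x ^ 63} = insert 0 (range ?q)"
    using range_periodic_eq_image_lessThan[of ?q 7, OF period]
    by (auto simp: lessThan_nat_numeral q_values mersenne_power_def)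
  note shift = mersenne_power_relation_shift[of x, OF char]
  have shifted: "?q n + ?q (n + a) = ?q (n + b)" if "?q 0 + ?q a = ?q b" for a b n
    using shift[OF that, of n] by (simp add: add.commute)
  show ?thesis
    unfolding orbit
  proof
    assume "additive_subgroup (insert 0 (range ?q))"
    then have "?q 0 + ?q 1 \<in> insert 0 (range ?q)"
      unfolding additive_subgroup_def by blast
    moreover have "distinct [0, ?q 0, ?q 1, ?q 2, ?q 3, ?q 4, ?q 5, ?q 6]"
      using assms(2) by (simp only: q_values)
    ultimately have "?q 0 + ?q 1 = ?q 3 \<or> ?q 0 + ?q 2 = ?q 3"
      using seven_periodic_first_sum_cases[of ?q, OF char period shift] by blast
    then show "1 + x = x ^ 7 \<or> 1 + x ^ 3 = x ^ 7"
      by (simp only: q_values)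
  next
    assume "1 + x = x ^ 7 \<or> 1 + x ^ 3 = x ^ 7"
    then consider "?q 0 + ?q 1 = ?q 3" | "?q 0 + ?q 2 = ?q 3"
      by (auto simp only: q_values)
    then show "additive_subgroup (insert 0 (range ?q))"
    proof cases
      case 1
      show ?thesis
        by (rule additive_subgroup_orbit_of_difference_triple[OF char period shifted[OF 1]]) auto
    next
      case 2
      show ?thesis
        by (rule additive_subgroup_orbit_of_difference_triple[OF char period shifted[OF 2]]) auto
    qed
  qed
qed

end
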